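(* Let $(V,V_0,V_1,E)$ be a finite turn-based game graph in which every node has at least one successor, and let $G\subseteq V$ be such that from every node of $V$ there is a path in $E$ to some node of $G$. Then for every $j_0\in\{0,1\}$ the call $\textsc{GameStack}(j_0,G,V)$ terminates: every execution of the while loop terminates, and only finitely many recursive calls of $\textsc{GameStack}$ are made.
   Context: Turn-based game graph: $V$ is the node set, partitioned into $V_0$ (nodes where player 0 moves) and $V_1$ (nodes where player 1 moves), $E\subseteq V\times V$ the edges. For $j\in\{0,1\}$ and $X\subseteq V$: $\mathrm{CPre}_j(X)=\{v\in V_j:\exists(v,u)\in E,\ u\in X\}\cup\{v\in V_{1-j}:\forall(v,u)\in E,\ u\in X\}$. Attractor: $\mathrm{Attr}_j(S)=\mu X.\,S\cup\mathrm{CPre}_j(X)$ (least fixpoint). Controlled-escape set: $\mathrm{Trap}_j(S,E')=\nu X.\,E'\cup(\mathrm{CPre}_j(X)\cap S)$ (greatest fixpoint). Procedure $\textsc{UnconditionalAssumption}(j,g)$: $A:=\mathrm{Attr}_j(g)$; $B:=\mathrm{Attr}_{1-j}(A)$; $r:=(B\setminus A)\cap\mathrm{Trap}_j(B,A)$; return $(A,r)$. Procedure $\textsc{GameStack}(j,G,U)$: set $\mathit{goal}:=G$ and $\mathit{trap}:=V$; while $\mathit{trap}\ne\emptyset$: $(\mathit{attr},\mathit{trap}):=\textsc{UnconditionalAssumption}(j,\mathit{goal})$, $\mathit{goal}:=\mathit{attr}\cup\mathit{trap}$, and record the assumption $\Box\Diamond(\mathit{trap}\rightarrow\mathit{attr})$.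 After the loop, record the game $(j,\mathit{goal}\setminus G,G,\text{assumptions})$ on a stack, set $U:=U\setminus\mathit{goal}$; if $U=\emptyset$ return; otherwise call $\textsc{GameStack}(1-j,\mathit{goal},U)$ and then return. (The recorded data does not affect control flow.) *)

theory Defs
  imports Main "HOL-Library.While_Combinator"
begin

definition playerNodes :: "'v set \<Rightarrow> 'v set \<Rightarrow> nat \<Rightarrow> 'v set" where
  "playerNodes V0 V1 j = (if j = 0 then V0 else V1)"

definition CPre :: "'v set \<Rightarrow> 'v set \<Rightarrow> ('v \<times> 'v) set \<Rightarrow> nat \<Rightarrow> 'v set \<Rightarrow> 'v set" where
  "CPre V0 V1 E j X =
     {v \<in> playerNodes V0 V1 j. \<exists>u. (v, u) \<in> E \<and> u \<in> X}
   \<union> {v \<in> playerNodes V0 V1 (1 - j). \<forall>u. (v, u) \<in> E \<longrightarrow> u \<in> X}"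

definition Attr :: "'v set \<Rightarrow> 'v set \<Rightarrow> ('v \<times> 'v) set \<Rightarrow> nat \<Rightarrow> 'v set \<Rightarrow> 'v set" where
  "Attr V0 V1 E j S = lfp (\<lambda>X. S \<union> CPre V0 V1 E j X)"

definition Trap :: "'v set \<Rightarrow> 'v set \<Rightarrow> ('v \<times> 'v) set \<Rightarrow> nat \<Rightarrow> 'v set \<Rightarrow> 'v set \<Rightarrow> 'v set" where
  "Trap V0 V1 E j S E' = gfp (\<lambda>X. E' \<union> (CPre V0 V1 E j X \<inter> S))"

definition UnconditionalAssumption ::
  "'v set \<Rightarrow> 'v set \<Rightarrow> ('v \<times> 'v) set \<Rightarrow> nat \<Rightarrow> 'v set \<Rightarrow> 'v set \<times> 'v set" where
  "UnconditionalAssumption V0 V1 E j g =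
     (let A = Attr V0 V1 E j g;
          B = Attr V0 V1 E (1 - j) A;
          r = (B - A) \<inter> Trap V0 V1 E j B A
      in (A, r))"

definition gameStackLoop ::
  "'v set \<Rightarrow> 'v set \<Rightarrow> 'v set \<Rightarrow> ('v \<times> 'v) set \<Rightarrow> nat \<Rightarrow> 'v set \<Rightarrow> ('v set \<times> 'v set) option" where
  "gameStackLoop V V0 V1 E j G =
     while_option (\<lambda>(goal, trap). trap \<noteq> {})
       (\<lambda>(goal, trap). let (attr, trap') = UnconditionalAssumption V0 V1 E j goal
                        in (attr \<union> trap', trap'))
       (G, V)"

text \<open>GameStack, with the recorded data (which does not affect control flow) omitted.
  As a partial function in the option monad, the result is None exactly when
  the computation diverges (a non-terminating loop or infinitely many recursive calls).\<close>

partial_function (option) gameStack ::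
  "'v set \<Rightarrow> 'v set \<Rightarrow> 'v set \<Rightarrow> ('v \<times> 'v) set \<Rightarrow> nat \<Rightarrow> 'v set \<Rightarrow> 'v set \<Rightarrow> unit option" where
  "gameStack V V0 V1 E j G U =
     (case gameStackLoop V V0 V1 E j G of
        None \<Rightarrow> None
      | Some (goal, trap) \<Rightarrow>
          (let U' = U - goal in
           if U' = {} then Some () else gameStack V V0 V1 E (1 - j) goal U'))"

end

theory Submission
  imports Defs
begin

text \<open>Each pass of the loop of GameStack either adds a nonempty trap to the goal or
  stops with a goal that is closed under the controllable predecessor of the current
  player, so the loop terminates. Two consecutive calls of GameStack then produce a
  goal that is closed for player j and for player 1 - j; if the second call did not
  enlarge the goal, that goal would be closed under all predecessors, and since every
  node reaches G it would be all of V. Hence every two recursive calls strictly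
  shrink the set of nodes outside the goal.\<close>

lemma CPre_mono: "X \<subseteq> Y \<Longrightarrow> CPre V0 V1 E j X \<subseteq> CPre V0 V1 E j Y"
  unfolding CPre_def by blast

lemma CPre_subset: "CPre V0 V1 E j X \<subseteq> V0 \<union> V1"
  unfolding CPre_def playerNodes_def by auto

lemma Attr_unfold: "Attr V0 V1 E j S = S \<union> CPre V0 V1 E j (Attr V0 V1 E j S)"
proof -
  have "mono (\<lambda>X. S \<union> CPre V0 V1 E j X)"
    by (rule monoI) (use CPre_mono in blast)
  then show ?thesis
    unfolding Attr_def by (rule lfp_unfold)
qed

lemma subset_Attr: "S \<subseteq> Attr V0 V1 E j S"
  by (subst Attr_unfold) blast

lemma CPre_Attr_subset: "CPre V0 V1 E j (Attr V0 V1 E j S) \<subseteq> Attr V0 V1 E j S"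
  by (subst (2) Attr_unfold) blast

lemma Attr_subset: "Attr V0 V1 E j S \<subseteq> S \<union> V0 \<union> V1"
  using Attr_unfold[of V0 V1 E j S] CPre_subset[of V0 V1 E j] by blast

lemma mem_CPre_closed_both_players:
  assumes "j \<in> {0, 1}" and "CPre V0 V1 E j X \<subseteq> X" and "CPre V0 V1 E (1 - j) X \<subseteq> X"
    and "v \<in> V0 \<union> V1" and "(v, u) \<in> E" and "u \<in> X"
  shows "v \<in> X"
proof -
  have "v \<in> CPre V0 V1 E j X \<or> v \<in> CPre V0 V1 E (1 - j) X"
    using assms(1,4-6) unfolding CPre_def playerNodes_def by auto
  with assms(2,3) show ?thesis
    by blast
qed

lemma gameStack_unfold:
  assumes "gameStackLoop V V0 V1 E j H = Some (goal, trap)"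
  shows "gameStack V V0 V1 E j H U =
    (if U - goal = {} then Some () else gameStack V V0 V1 E (1 - j) goal (U - goal))"
  by (subst gameStack.simps) (simp add: assms Let_def)

locale finite_game_graph =
  fixes V V0 V1 :: "'v set" and E :: "('v \<times> 'v) set"
  assumes finite_nodes: "finite V"
    and nodes_partition: "V0 \<union> V1 = V"
    and edges_subset: "E \<subseteq> V \<times> V"
begin

lemma UnconditionalAssumption_props:
  assumes "goal \<subseteq> V" and "UnconditionalAssumption V0 V1 E j goal = (A, r)"
  shows "goal \<subseteq> A" and "A \<subseteq> V" and "CPre V0 V1 E j A \<subseteq> A" and "r \<subseteq> V - A"
proof -
  have A: "A = Attr V0 V1 E j goal"
    and r: "r \<subseteq> Attr V0 V1 E (1 - j) A - A"
    using assms(2) unfolding UnconditionalAssumption_def Let_def by auto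
  show "goal \<subseteq> A" "CPre V0 V1 E j A \<subseteq> A"
    unfolding A by (rule subset_Attr, rule CPre_Attr_subset)
  show "A \<subseteq> V"
    using Attr_subset[of V0 V1 E j goal] assms(1) nodes_partition unfolding A by blast
  with r show "r \<subseteq> V - A"
    using Attr_subset[of V0 V1 E "1 - j" A] nodes_partition by blast
qed

lemma gameStackLoop_Some:
  assumes "G \<subseteq> V"
  obtains goal trap where "gameStackLoop V V0 V1 E j G = Some (goal, trap)"
    and "G \<subseteq> goal" and "goal \<subseteq> V" and "CPre V0 V1 E j goal \<subseteq> goal"
proof -
  define b where "b = (\<lambda>(goal :: 'v set, trap :: 'v set). trap \<noteq> {})"
  define c where "c = (\<lambda>(goal :: 'v set, trap :: 'v set).
    let (attr, trap') = UnconditionalAssumption V0 V1 E j goal in (attr \<union> trap', trap'))"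
  define P where "P = (\<lambda>(goal, trap :: 'v set). G \<subseteq> goal \<and> goal \<subseteq> V \<and>
    (trap = {} \<longrightarrow> CPre V0 V1 E j goal \<subseteq> goal))"
  \<comment> \<open>A pass with a nonempty trap strictly enlarges the goal; a pass with an empty
    trap only turns off the summand that records that the loop is still running.\<close>
  define f where "f = (\<lambda>(goal :: 'v set, trap :: 'v set).
    2 * card (V - goal) + (if trap = {} then 0 else 1 :: nat))"
  have step: "P (c s) \<and> f (c s) < f s" if "P s" and "b s" for s
  proof -
    obtain goal trap where s: "s = (goal, trap)"
      by force
    obtain A r where UA: "UnconditionalAssumption V0 V1 E j goal = (A, r)"
      by force
    have hyps: "G \<subseteq> goal" "goal \<subseteq> V" "trap \<noteq> {}"
      using that unfolding s P_def b_def by auto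
    note props = UnconditionalAssumption_props[OF hyps(2) UA]
    have cs: "c s = (A \<union> r, r)"
      unfolding s c_def by (simp add: UA)
    have "card (V - (A \<union> r)) \<le> card (V - goal)"
      using props(1) finite_nodes by (intro card_mono) auto
    moreover have "card (V - (A \<union> r)) < card (V - goal)" if "r \<noteq> {}"
    proof -
      have "V - (A \<union> r) \<subset> V - goal"
        using that props(1,4) by blast
      then show ?thesis
        using finite_nodes by (simp add: psubset_card_mono)
    qed
    ultimately have "f (c s) < f s"
      unfolding cs unfolding s f_def using hyps(3) by (cases "r = {}") auto
    moreover have "P (c s)"
      unfolding cs P_def using hyps props by auto
    ultimately show ?thesis
      by blast
  qed
  have P_init: "P (G, V)"
    unfolding P_def using assms CPre_subset[of V0 V1 E j] nodes_partition by auto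
  have loop: "gameStackLoop V V0 V1 E j G = while_option b c (G, V)"
    unfolding gameStackLoop_def b_def c_def by simp
  obtain t where t: "while_option b c (G, V) = Some t"
    using measure_while_option_Some[of P b c f, OF step P_init] by blast
  have "P t"
    using while_option_rule[of P b c, OF _ t] step P_init by blast
  moreover have "\<not> b t"
    using while_option_stop[OF t] .
  ultimately show ?thesis
    using that t unfolding loop P_def b_def by (cases t) auto
qed

lemma CPre_closed_both_players_eq_nodes:
  assumes reach: "\<forall>v\<in>V. \<exists>g\<in>G. (v, g) \<in> E\<^sup>*"
    and "G \<subseteq> X" and "X \<subseteq> V" and "j \<in> {0, 1}"
    and "CPre V0 V1 E j X \<subseteq> X" and "CPre V0 V1 E (1 - j) X \<subseteq> X"
  shows "X = V"
proof -
  have "v \<in> X" if "(v, g) \<in> E\<^sup>*" and "g \<in> X" for v g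
    using that
  proof (induction rule: converse_rtrancl_induct)
    case (step v u)
    then show ?case
      using mem_CPre_closed_both_players[OF assms(4-6)] edges_subset nodes_partition by blast
  qed
  with reach assms(2,3) show ?thesis
    by blast
qed

lemma gameStack_terminates:
  assumes reach: "\<forall>v\<in>V. \<exists>g\<in>G. (v, g) \<in> E\<^sup>*" and "j \<in> {0, 1}"
    and "G \<subseteq> H" and "H \<subseteq> V" and "V - H \<subseteq> U" and "U \<subseteq> V"
  shows "gameStack V V0 V1 E j H U \<noteq> None"
  using assms(2-)
proof (induction "card (V - H)" arbitrary: j H U rule: less_induct)
  case less
  obtain goal trap where loop: "gameStackLoop V V0 V1 E j H = Some (goal, trap)"
    and goal: "H \<subseteq> goal" "goal \<subseteq> V" "CPre V0 V1 E j goal \<subseteq> goal"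
    using gameStackLoop_Some[OF less.prems(3)] by blast
  have U_minus: "U - goal = V - goal"
    using goal(1,2) less.prems(4,5) by blast
  show ?case
  proof (cases "goal = V")
    case True
    then show ?thesis
      using gameStack_unfold[OF loop] U_minus by simp
  next
    case False
    obtain goal' trap' where loop': "gameStackLoop V V0 V1 E (1 - j) goal = Some (goal', trap')"
      and goal': "goal \<subseteq> goal'" "goal' \<subseteq> V" "CPre V0 V1 E (1 - j) goal' \<subseteq> goal'"
      using gameStackLoop_Some[OF goal(2)] by blast
    have "goal' \<noteq> goal"
      using CPre_closed_both_players_eq_nodes[OF reach _ goal(2) less.prems(1) goal(3)]
        goal' False less.prems(2) goal(1) by blast
    then have "V - goal' \<subset> V - H"
      using goal goal' by blast
    then have "card (V - goal') < card (V - H)"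
      using finite_nodes by (simp add: psubset_card_mono)
    then have "gameStack V V0 V1 E j goal' (V - goal') \<noteq> None"
      using less.hyps less.prems(1,2) goal(1) goal' by blast
    moreover have "1 - (1 - j) = j" "V - goal - goal' = V - goal'"
      using less.prems(1) goal' by auto
    ultimately show ?thesis
      using gameStack_unfold[OF loop] gameStack_unfold[OF loop'] U_minus False goal(2)
      by auto
  qed
qed

end

theorem mainTheorem4:
  fixes V V0 V1 G :: "'v set" and E :: "('v \<times> 'v) set" and j0 :: nat
  assumes "finite V"
    and "V0 \<union> V1 = V" and "V0 \<inter> V1 = {}"
    and "E \<subseteq> V \<times> V"
    and "\<forall>v\<in>V. \<exists>u. (v, u) \<in> E"
    and "G \<subseteq> V"
    and "\<forall>v\<in>V. \<exists>g\<in>G. (v, g) \<in> E\<^sup>*"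
    and "j0 \<in> {0, 1}"
  shows "gameStack V V0 V1 E j0 G V \<noteq> None"
proof -
  interpret finite_game_graph V V0 V1 E
    using assms(1,2,4) by unfold_locales
  show ?thesis
    using gameStack_terminates[OF assms(7,8) subset_refl assms(6)] by blast
qed

end
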